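(* Let $A\to X\to Y\to B$ be a Markov chain of random variables on finite sets, $f:[0,\infty)\to\mathbb{R}$ convex with $f(1)=0$, and $G$ an increasing convex function on $[0,\infty)$. Then $I_{G,f}(A;B)\le I_{G,f}(X;Y)$.
   Context: $D_f(p\|q)=\sum_y q(y) f(p(y)/q(y))$ with $0f(0/0)=0$. $I_{G,f}(U;V)=\min_{q_V}\sum_u p_U(u)\,G(D_f(p_{V|U=u}\|q_V))$, minimum over distributions on the alphabet of $V$. *)

theory Defs
  imports "HOL-Probability.Probability"
begin

text \<open>Slope at infinity f'(\<infinity>) = lim_{t\<rightarrow>\<infinity>} f(t)/t (exists in (-\<infinity>,\<infinity>] for convex f),
  used for the standard convention 0 f(a/0) = a f'(\<infinity>) when a > 0.\<close>
definition slope_inf :: "(real \<Rightarrow> real) \<Rightarrow> ereal" where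
  "slope_inf f = Liminf at_top (\<lambda>t. ereal (f t / t))"

definition fdiv :: "(real \<Rightarrow> real) \<Rightarrow> ('v::finite \<Rightarrow> real) \<Rightarrow> ('v \<Rightarrow> real) \<Rightarrow> ereal" where
  "fdiv f p q = (\<Sum>y\<in>UNIV.
     (if q y = 0 then (if p y = 0 then 0 else ereal (p y) * slope_inf f)
      else ereal (q y * f (p y / q y))))"

text \<open>Extension of G to [0,\<infinity>] by G(\<infinity>) = lim_{t\<rightarrow>\<infinity>} G(t) (sup, G increasing).\<close>
definition Gext :: "(real \<Rightarrow> real) \<Rightarrow> ereal \<Rightarrow> ereal" where
  "Gext G x = (case x of ereal r \<Rightarrow> ereal (G r)
                | PInfty \<Rightarrow> (SUP t\<in>{0..}. ereal (G t))
                | MInfty \<Rightarrow> ereal (G 0))"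

definition margU :: "('u \<times> 'v) pmf \<Rightarrow> 'u pmf" where "margU J = map_pmf fst J"

definition condV :: "('u \<times> 'v) pmf \<Rightarrow> 'u \<Rightarrow> 'v \<Rightarrow> real" where
  "condV J u v = pmf J (u, v) / pmf (margU J) u"

text \<open>I_{G,f}(U;V) = min over q_V of sum_u p_U(u) G(D_f(p_{V|U=u} || q_V)).
  The minimum is attained (lower semicontinuity on the compact simplex), so it equals the infimum.\<close>
definition IGf :: "(real \<Rightarrow> real) \<Rightarrow> (real \<Rightarrow> real) \<Rightarrow> ('u::finite \<times> 'v::finite) pmf \<Rightarrow> ereal" where
  "IGf G f J = (INF q\<in>(UNIV :: 'v pmf set).
      \<Sum>u\<in>UNIV. ereal (pmf (margU J) u) * Gext G (fdiv f (condV J u) (pmf q)))"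

end

theory Submission
  imports Defs
begin

(* Both sides of I_{G,f} obey a data-processing inequality.  Garbling the second variable by a
   stochastic matrix K sends every candidate q_V to q_V K and, by joint convexity of the
   perspective (p, q) |-> q f(p/q), cannot increase any D_f(p_{V|U=u} || q_V); as G is increasing,
   I(U; V') <= I(U; V).  For a Markov chain U -> T -> V each p_{V|U=u} is the mixture
   sum_t p(t|u) p_{V|T=t}; convexity of D_f in its first argument and Jensen's inequality for the
   increasing convex G give I(U; V) <= I(T; V).  A Markov chain A -> X -> Y -> B contains the chains
   A -> Y -> B and A -> X -> Y, so I(A; B) <= I(A; Y) <= I(X; Y). *)

subsection \<open>Slope at infinity\<close>

lemma convex_on_secant_le:
  fixes f :: "real \<Rightarrow> real"
  assumes f: "convex_on I f" and x: "x \<in> I" and t: "t \<in> I" and d: "0 < d" "x + d \<le> t"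
  shows "f x + (f (x + d) - f x) / d * (t - x) \<le> f t"
proof (cases "x + d = t")
  case False
  then have "(f x - f (x + d)) / (x - (x + d)) \<le> (f x - f t) / (x - t)"
    using d by (intro convex_on_slope_le(1)[OF f x t]) auto
  then have "(f (x + d) - f x) / d \<le> (f t - f x) / (t - x)"
    by (metis add_diff_cancel_left' minus_diff_eq minus_divide_divide)
  then show ?thesis
    using d False by (simp add: field_simps)
next
  case True
  then show ?thesis
    using d by (simp flip: True)
qed

lemma slope_le_slope_inf:
  fixes f :: "real \<Rightarrow> real"
  assumes f: "convex_on {0..} f" and x: "0 \<le> x" and d: "0 < d"
  shows "ereal ((f (x + d) - f x) / d) \<le> slope_inf f"
proof -
  define m where "m = (f (x + d) - f x) / d"
  define c where "c = f x - m * x"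
  have "((\<lambda>t. ereal (m + c / t)) \<longlongrightarrow> ereal (m + 0)) at_top"
    by (intro tendsto_intros tendsto_divide_0[OF tendsto_const]
        filterlim_at_top_imp_at_infinity filterlim_ident)
  then have "Liminf at_top (\<lambda>t. ereal (m + c / t)) = ereal m"
    by (simp add: lim_imp_Liminf)
  moreover have "eventually (\<lambda>t. ereal (m + c / t) \<le> ereal (f t / t)) at_top"
    using eventually_ge_at_top[of "x + d"]
  proof eventually_elim
    case (elim t)
    then have "f x + m * (t - x) \<le> f t"
      using convex_on_secant_le[OF f, of x t d] x d by (simp add: m_def)
    then have "(m * t + c) / t \<le> f t / t"
      using elim x d by (intro divide_right_mono) (auto simp: c_def algebra_simps)
    then show ?case
      using elim x d by (simp add: add_divide_distrib)
  qed
  ultimately show ?thesis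
    unfolding slope_inf_def m_def[symmetric] by (metis Liminf_mono)
qed

lemma slope_inf_neq_minf:
  assumes "convex_on {0..} f"
  shows "slope_inf f \<noteq> -\<infinity>"
  using slope_le_slope_inf[OF assms, of 0 1] by auto

subsection \<open>Perspective and \<open>f\<close>-divergence\<close>

definition perspective :: "(real \<Rightarrow> real) \<Rightarrow> real \<Rightarrow> real \<Rightarrow> ereal" where
  "perspective f p q =
     (if q = 0 then (if p = 0 then 0 else ereal p * slope_inf f) else ereal (q * f (p / q)))"

lemma fdiv_eq_sum_perspective: "fdiv f p q = (\<Sum>y\<in>UNIV. perspective f (p y) (q y))"
  by (simp add: fdiv_def perspective_def)

lemma perspective_scale:
  assumes "0 \<le> c"
  shows "perspective f (c * p) (c * q) = ereal c * perspective f p q"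
proof (cases "c = 0")
  case True
  then show ?thesis
    by (simp add: perspective_def zero_ereal_def[symmetric])
next
  case False
  then show ?thesis
    by (auto simp: perspective_def mult.assoc times_ereal.simps(1)[symmetric]
        simp del: times_ereal.simps(1))
qed

lemma perspective_add_mass_le:
  assumes f: "convex_on {0..} f" and q: "0 < q" and p: "0 \<le> p" and r: "0 \<le> r"
  shows "perspective f (p + r) q \<le> perspective f p q + perspective f r 0"
proof (cases "r = 0 \<or> slope_inf f = \<infinity>")
  case True
  then show ?thesis
    using q r by (auto simp: perspective_def)
next
  case False
  then obtain \<sigma> where \<sigma>: "slope_inf f = ereal \<sigma>" and r_pos: "0 < r"
    using slope_inf_neq_minf[OF f] r by (cases "slope_inf f") auto
  have "(f ((p + r) / q) - f (p / q)) / (r / q) \<le> \<sigma>"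
    using slope_le_slope_inf[OF f, of "p / q" "r / q"] p q r_pos \<sigma> by (simp add: add_divide_distrib)
  then have "q * f ((p + r) / q) \<le> q * f (p / q) + r * \<sigma>"
    using q r_pos by (simp add: divide_le_eq algebra_simps)
  then show ?thesis
    using q r_pos \<sigma> by (simp add: perspective_def)
qed

lemma perspective_subadditive:
  assumes f: "convex_on {0..} f"
    and p1: "0 \<le> p1" and p2: "0 \<le> p2" and q1: "0 \<le> q1" and q2: "0 \<le> q2"
  shows "perspective f (p1 + p2) (q1 + q2) \<le> perspective f p1 q1 + perspective f p2 q2"
proof -
  consider "q1 = 0" "q2 = 0" | "0 < q1" "q2 = 0" | "q1 = 0" "0 < q2" | "0 < q1" "0 < q2"
    using q1 q2 by linarith
  then show ?thesis
  proof cases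
    case 1
    then show ?thesis
      using p1 p2 by (auto simp: perspective_def ereal_left_distrib[symmetric])
  next
    case 2
    then show ?thesis
      using perspective_add_mass_le[OF f _ p1 p2] by simp
  next
    case 3
    then show ?thesis
      using perspective_add_mass_le[OF f _ p2 p1, of q2] by (simp add: add.commute)
  next
    case 4
    define \<mu> where "\<mu> = q2 / (q1 + q2)"
    have \<mu>: "0 \<le> \<mu>" "\<mu> \<le> 1" "1 - \<mu> = q1 / (q1 + q2)"
      using 4 by (auto simp: \<mu>_def field_simps)
    have "(1 - \<mu>) * (p1 / q1) + \<mu> * (p2 / q2) = (p1 + p2) / (q1 + q2)"
      using 4 unfolding \<mu>(3) by (simp add: \<mu>_def add_divide_distrib)
    then have "f ((p1 + p2) / (q1 + q2)) \<le> (1 - \<mu>) * f (p1 / q1) + \<mu> * f (p2 / q2)"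
      using convex_onD[OF f \<mu>(1,2), of "p1 / q1" "p2 / q2"] p1 p2 4 by simp
    also have "\<dots> = (q1 * f (p1 / q1) + q2 * f (p2 / q2)) / (q1 + q2)"
      unfolding \<mu>(3) by (simp add: \<mu>_def add_divide_distrib)
    finally have "(q1 + q2) * f ((p1 + p2) / (q1 + q2)) \<le> q1 * f (p1 / q1) + q2 * f (p2 / q2)"
      using 4 by (simp add: pos_le_divide_eq mult.commute)
    then show ?thesis
      using 4 by (simp add: perspective_def)
  qed
qed

lemma perspective_sum_le:
  assumes f: "convex_on {0..} f"
    and p: "\<And>i. i \<in> I \<Longrightarrow> 0 \<le> p i" and q: "\<And>i. i \<in> I \<Longrightarrow> 0 \<le> q i"
  shows "perspective f (\<Sum>i\<in>I. p i) (\<Sum>i\<in>I. q i) \<le> (\<Sum>i\<in>I. perspective f (p i) (q i))"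
  using p q
proof (induction I rule: infinite_finite_induct)
  case (insert i I)
  have "perspective f (\<Sum>i\<in>insert i I. p i) (\<Sum>i\<in>insert i I. q i)
      \<le> perspective f (p i) (q i) + perspective f (\<Sum>i\<in>I. p i) (\<Sum>i\<in>I. q i)"
    using insert by (simp add: perspective_subadditive[OF f] sum_nonneg)
  also have "\<dots> \<le> (\<Sum>i\<in>insert i I. perspective f (p i) (q i))"
    using insert by (simp add: add_left_mono)
  finally show ?case .
qed (simp_all add: perspective_def)

lemma sum_distrib_left_ereal:
  assumes "0 \<le> c"
  shows "ereal c * sum g A = (\<Sum>x\<in>A. ereal c * g x)"
  using sum_distrib_right_ereal[OF assms, of g A] by (simp add: mult.commute)

lemma fdiv_nonneg:
  fixes p q :: "'v::finite \<Rightarrow> real"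
  assumes f: "convex_on {0..} f" and f1: "f 1 = 0"
    and p: "\<And>y. 0 \<le> p y" "sum p UNIV = 1" and q: "\<And>y. 0 \<le> q y" "sum q UNIV = 1"
  shows "0 \<le> fdiv f p q"
proof -
  have "perspective f (sum p UNIV) (sum q UNIV) \<le> fdiv f p q"
    unfolding fdiv_eq_sum_perspective by (intro perspective_sum_le[OF f]) (auto simp: p q)
  then show ?thesis
    using p q f1 by (simp add: perspective_def zero_ereal_def)
qed

lemma fdiv_channel_le:
  fixes p q :: "'v::finite \<Rightarrow> real" and K :: "'v \<Rightarrow> 'w::finite \<Rightarrow> real"
  assumes f: "convex_on {0..} f" and p: "\<And>v. 0 \<le> p v" and q: "\<And>v. 0 \<le> q v"
    and K: "\<And>v w. 0 \<le> K v w" "\<And>v. (\<Sum>w\<in>UNIV. K v w) = 1"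
  shows "fdiv f (\<lambda>w. \<Sum>v\<in>UNIV. p v * K v w) (\<lambda>w. \<Sum>v\<in>UNIV. q v * K v w) \<le> fdiv f p q"
proof -
  have scale: "perspective f (p v * K v w) (q v * K v w) = ereal (K v w) * perspective f (p v) (q v)"
    for v w
    using perspective_scale[OF K(1)] by (simp add: mult.commute)
  have "fdiv f (\<lambda>w. \<Sum>v\<in>UNIV. p v * K v w) (\<lambda>w. \<Sum>v\<in>UNIV. q v * K v w)
      \<le> (\<Sum>w\<in>UNIV. \<Sum>v\<in>UNIV. perspective f (p v * K v w) (q v * K v w))"
    unfolding fdiv_eq_sum_perspective
    by (intro sum_mono perspective_sum_le[OF f]) (auto simp: p q K)
  also have "\<dots> = (\<Sum>v\<in>UNIV. (\<Sum>w\<in>UNIV. ereal (K v w)) * perspective f (p v) (q v))"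
    by (subst sum.swap) (simp add: scale K sum_ereal_left_distrib del: sum_ereal)
  also have "\<dots> = fdiv f p q"
    using K by (simp add: fdiv_eq_sum_perspective)
  finally show ?thesis .
qed

lemma fdiv_mixture_le:
  fixes p :: "'t \<Rightarrow> 'v::finite \<Rightarrow> real" and q :: "'v \<Rightarrow> real" and l :: "'t \<Rightarrow> real"
  assumes f: "convex_on {0..} f" and p: "\<And>t v. 0 \<le> p t v" and q: "\<And>v. 0 \<le> q v"
    and l: "\<And>t. 0 \<le> l t" "(\<Sum>t\<in>T. l t) = 1"
  shows "fdiv f (\<lambda>v. \<Sum>t\<in>T. l t * p t v) q \<le> (\<Sum>t\<in>T. ereal (l t) * fdiv f (p t) q)"
proof -
  have "fdiv f (\<lambda>v. \<Sum>t\<in>T. l t * p t v) q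
      = (\<Sum>v\<in>UNIV. perspective f (\<Sum>t\<in>T. l t * p t v) (\<Sum>t\<in>T. l t * q v))"
    using l by (simp add: fdiv_eq_sum_perspective flip: sum_distrib_right)
  also have "\<dots> \<le> (\<Sum>v\<in>UNIV. \<Sum>t\<in>T. perspective f (l t * p t v) (l t * q v))"
    by (intro sum_mono perspective_sum_le[OF f]) (auto simp: p q l)
  also have "\<dots> = (\<Sum>v\<in>UNIV. \<Sum>t\<in>T. ereal (l t) * perspective f (p t v) (q v))"
    by (simp add: perspective_scale l)
  also have "\<dots> = (\<Sum>t\<in>T. ereal (l t) * fdiv f (p t) q)"
    by (subst sum.swap) (simp add: fdiv_eq_sum_perspective sum_distrib_left_ereal l)
  finally show ?thesis .
qed

subsection \<open>Extension of \<open>G\<close> to \<open>[0, \<infinity>]\<close>\<close>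

lemma Gext_mono:
  assumes G: "mono_on {0..} G" and "0 \<le> d" "d \<le> e"
  shows "Gext G d \<le> Gext G e"
  using assms(2,3)
proof (cases d; cases e)
  fix r s assume "d = ereal r" "e = ereal s"
  then show "0 \<le> d \<Longrightarrow> d \<le> e \<Longrightarrow> Gext G d \<le> Gext G e"
    using mono_onD[OF G, of r s] by (simp add: Gext_def)
next
  fix r assume "d = ereal r" "e = \<infinity>"
  then show "0 \<le> d \<Longrightarrow> d \<le> e \<Longrightarrow> Gext G d \<le> Gext G e"
    by (auto simp: Gext_def intro!: SUP_upper)
qed auto

lemma Gext_eq_const:
  assumes G: "\<forall>t\<ge>0. G t = G 0" and e: "0 \<le> e"
  shows "Gext G e = ereal (G 0)"
proof (cases e)
  case (real r)
  then show ?thesis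
    using e G[rule_format, of r] by (simp add: Gext_def)
next
  case PInf
  have "ereal (G t) \<le> ereal (G 0)" if "t \<in> {0..}" for t
    using G that by (metis atLeast_iff order_refl)
  then have "(SUP t\<in>{0..}. ereal (G t)) = ereal (G 0)"
    by (intro antisym SUP_least SUP_upper2[of 0]) auto
  then show ?thesis
    using PInf by (simp add: Gext_def)
qed (use e in simp)

lemma Gext_infinity:
  assumes G: "mono_on {0..} G" "convex_on {0..} G" and s: "0 \<le> s" "G s \<noteq> G 0"
  shows "Gext G \<infinity> = \<infinity>"
proof -
  have "G 0 < G s" and "0 < s"
    using mono_onD[OF G(1), of 0 s] s by (auto simp: order.order_iff_strict)
  define k where "k = (G s - G 0) / s"
  have "0 < k"
    using \<open>G 0 < G s\<close> \<open>0 < s\<close> by (simp add: k_def)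
  have "\<exists>t\<in>{0..}. ereal M < ereal (G t)" for M
  proof
    define t where "t = max s ((M - G 0) / k + 1)"
    have "G 0 + k * t \<le> G t"
      using convex_on_secant_le[OF G(2), of 0 t s] \<open>0 < s\<close> by (simp add: k_def t_def)
    moreover have "M - G 0 < k * t"
      using \<open>0 < k\<close> by (simp add: t_def max_def field_simps split: if_split)
    ultimately show "ereal M < ereal (G t)"
      by simp
    show "t \<in> {0..}"
      using \<open>0 < s\<close> by (simp add: t_def)
  qed
  then have "(SUP t\<in>{0..}. ereal (G t)) = \<infinity>"
    by (intro SUP_PInfty) (metis less_imp_le)
  then show ?thesis
    by (simp add: Gext_def)
qed

lemma Gext_jensen:
  fixes G :: "real \<Rightarrow> real" and w :: "'i \<Rightarrow> real" and d :: "'i \<Rightarrow> ereal"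
  assumes G: "mono_on {0..} G" "convex_on {0..} G" and I: "finite I"
    and w: "\<And>i. i \<in> I \<Longrightarrow> 0 < w i" "sum w I = 1" and d: "\<And>i. i \<in> I \<Longrightarrow> 0 \<le> d i"
  shows "Gext G (\<Sum>i\<in>I. ereal (w i) * d i) \<le> (\<Sum>i\<in>I. ereal (w i) * Gext G (d i))"
proof (cases "\<forall>t\<ge>0. G t = G 0")
  case True
  have "(\<Sum>i\<in>I. ereal (w i) * Gext G (d i)) = (\<Sum>i\<in>I. ereal (w i * G 0))"
    using Gext_eq_const[OF True] d by (intro sum.cong) simp_all
  also have "\<dots> = ereal (G 0)"
    using w(2) by (simp flip: sum_distrib_right)
  also have "\<dots> = Gext G (\<Sum>i\<in>I. ereal (w i) * d i)"
    using d w(1) by (intro Gext_eq_const[OF True, symmetric] sum_nonneg) (auto simp: less_imp_le)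
  finally show ?thesis
    by simp
next
  case False
  then have G_inf: "Gext G \<infinity> = \<infinity>"
    using Gext_infinity[OF G] by blast
  show ?thesis
  proof (cases "\<exists>j\<in>I. d j = \<infinity>")
    case True
    then obtain j where "j \<in> I" "ereal (w j) * Gext G (d j) = \<infinity>"
      using w(1) G_inf by fastforce
    then have "(\<Sum>i\<in>I. ereal (w i) * Gext G (d i)) = \<infinity>"
      using I by (subst sum_Pinfty) auto
    then show ?thesis
      by simp
  next
    case False
    define r where "r i = real_of_ereal (d i)" for i
    have dr: "d i = ereal (r i)" and r: "0 \<le> r i" if "i \<in> I" for i
      using False d[OF that] that unfolding r_def by (cases "d i"; auto)+
    have "G (\<Sum>i\<in>I. w i *\<^sub>R r i) \<le> (\<Sum>i\<in>I. w i * G (r i))"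
      using w r by (intro convex_on_sum[OF I _ G(2)]) (auto simp: less_imp_le)
    moreover have "(\<Sum>i\<in>I. ereal (w i) * d i) = ereal (\<Sum>i\<in>I. w i * r i)"
      using dr by (simp add: sum_ereal[symmetric] del: sum_ereal)
    moreover have "(\<Sum>i\<in>I. ereal (w i) * Gext G (d i)) = ereal (\<Sum>i\<in>I. w i * G (r i))"
      using dr by (simp add: Gext_def sum_ereal[symmetric] del: sum_ereal)
    ultimately show ?thesis
      by (simp add: Gext_def)
  qed
qed

lemma pmf_map_fst_eq_sum:
  fixes J :: "('u \<times> 'v::finite) pmf"
  shows "pmf (map_pmf fst J) u = (\<Sum>v\<in>UNIV. pmf J (u, v))"
proof -
  have "pmf (map_pmf fst J) u = measure J (Pair u ` UNIV)"
    unfolding pmf_map by (rule arg_cong[where f = "measure J"]) auto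
  then show ?thesis
    by (simp add: measure_measure_pmf_finite sum.reindex inj_on_def)
qed

lemma pmf_map_snd_eq_sum:
  fixes J :: "('u::finite \<times> 'v) pmf"
  shows "pmf (map_pmf snd J) v = (\<Sum>u\<in>UNIV. pmf J (u, v))"
proof -
  have "pmf (map_pmf snd J) v = measure J ((\<lambda>u. (u, v)) ` UNIV)"
    unfolding pmf_map by (rule arg_cong[where f = "measure J"]) auto
  then show ?thesis
    by (simp add: measure_measure_pmf_finite sum.reindex inj_on_def)
qed

lemma pmf_le_pmf_map: "pmf P \<omega> \<le> pmf (map_pmf g P) (g \<omega>)"
proof -
  have "measure P {\<omega>} \<le> measure P (g -` {g \<omega>})"
    by (rule measure_pmf.finite_measure_mono) auto
  then show ?thesis
    by (simp add: pmf_map measure_pmf_single)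
qed

lemma pmf_map_eq_sum_if:
  fixes P :: "'o::finite pmf"
  shows "pmf (map_pmf g P) z = (\<Sum>\<omega>\<in>UNIV. if g \<omega> = z then pmf P \<omega> else 0)"
  by (simp add: pmf_map measure_measure_pmf_finite sum.If_cases vimage_def Collect_conj_eq)

lemma sum_UNIV_prod:
  fixes h :: "('a::finite \<times> 'b::finite) \<Rightarrow> 'c::comm_monoid_add"
  shows "sum h UNIV = (\<Sum>a\<in>UNIV. \<Sum>b\<in>UNIV. h (a, b))"
  by (simp add: sum.cartesian_product)

lemma sum_if_zero: "(\<Sum>b\<in>A. if P then g b else 0) = (if P then sum g A else 0)"
  by simp

lemmas pmf_marginal_simps =
  pmf_map_eq_sum_if sum_UNIV_prod if_if_eq_conj[symmetric] sum_if_zero sum.delta sum.delta'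

lemma pmf_margU:
  fixes J :: "('u \<times> 'v::finite) pmf"
  shows "pmf (margU J) u = (\<Sum>v\<in>UNIV. pmf J (u, v))"
  by (simp add: margU_def pmf_map_fst_eq_sum)

lemma sum_pmf_UNIV: "(\<Sum>x\<in>UNIV. pmf q x) = 1"
  for q :: "'a::finite pmf"
  by (rule sum_pmf_eq_1) auto

lemma condV_nonneg: "0 \<le> condV J u v"
  by (simp add: condV_def)

lemma sum_condV_eq_1:
  fixes J :: "('u \<times> 'v::finite) pmf"
  assumes "pmf (margU J) u \<noteq> 0"
  shows "(\<Sum>v\<in>UNIV. condV J u v) = 1"
  using assms by (simp add: condV_def pmf_margU flip: sum_divide_distrib)

lemma fdiv_condV_nonneg:
  assumes "convex_on {0..} f" "f 1 = 0" and "pmf (margU J) u \<noteq> 0"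
  shows "0 \<le> fdiv f (condV J u) (pmf q)"
  using assms by (intro fdiv_nonneg) (simp_all add: condV_nonneg sum_condV_eq_1 sum_pmf_UNIV)

subsection \<open>Data processing for \<open>IGf\<close>\<close>

lemma stochastic_image_pmf:
  fixes q :: "'v::finite pmf" and K :: "'v \<Rightarrow> 'w::finite \<Rightarrow> real"
  assumes K: "\<And>v w. 0 \<le> K v w" "\<And>v. (\<Sum>w\<in>UNIV. K v w) = 1"
  obtains q' where "pmf q' = (\<lambda>w. \<Sum>v\<in>UNIV. pmf q v * K v w)"
proof -
  define g where "g = (\<lambda>w. \<Sum>v\<in>UNIV. pmf q v * K v w)"
  have g: "0 \<le> g w" for w
    unfolding g_def by (intro sum_nonneg mult_nonneg_nonneg pmf_nonneg K(1))
  have "(\<Sum>w\<in>UNIV. g w) = 1"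
    unfolding g_def by (subst sum.swap) (simp add: K(2) sum_pmf_UNIV flip: sum_distrib_left)
  then have "(\<integral>\<^sup>+w. ennreal (g w) \<partial>count_space UNIV) = 1"
    using g by (simp add: nn_integral_count_space_finite sum_ennreal)
  then have "pmf (embed_pmf g) = g"
    by (intro ext pmf_embed_pmf[OF g])
  then show ?thesis
    using that g_def by blast
qed

lemma IGf_le_of_channel:
  fixes J1 :: "('u::finite \<times> 'v::finite) pmf" and J2 :: "('u \<times> 'w::finite) pmf"
    and K :: "'v \<Rightarrow> 'w \<Rightarrow> real"
  assumes f: "convex_on {0..} f" "f 1 = 0" and G: "mono_on {0..} G"
    and K: "\<And>v w. 0 \<le> K v w" "\<And>v. (\<Sum>w\<in>UNIV. K v w) = 1"
    and J2: "\<And>u w. pmf J2 (u, w) = (\<Sum>v\<in>UNIV. pmf J1 (u, v) * K v w)"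
  shows "IGf G f J2 \<le> IGf G f J1"
  unfolding IGf_def
proof (rule INF_mono)
  fix q :: "'v pmf"
  obtain q' where q': "pmf q' = (\<lambda>w. \<Sum>v\<in>UNIV. pmf q v * K v w)"
    using stochastic_image_pmf[OF K] .
  have marg: "pmf (margU J2) u = pmf (margU J1) u" for u
    unfolding pmf_margU J2 by (subst sum.swap) (simp add: K(2) flip: sum_distrib_left)
  have cond: "condV J2 u = (\<lambda>w. \<Sum>v\<in>UNIV. condV J1 u v * K v w)" for u
    by (simp add: fun_eq_iff condV_def J2 marg sum_divide_distrib)
  have "ereal (pmf (margU J2) u) * Gext G (fdiv f (condV J2 u) (pmf q'))
      \<le> ereal (pmf (margU J1) u) * Gext G (fdiv f (condV J1 u) (pmf q))" for u
  proof (cases "pmf (margU J1) u = 0")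
    case False
    have "fdiv f (condV J2 u) (pmf q') \<le> fdiv f (condV J1 u) (pmf q)"
      unfolding cond q' by (rule fdiv_channel_le[OF f(1) condV_nonneg pmf_nonneg K])
    moreover have "0 \<le> fdiv f (condV J2 u) (pmf q')"
      using False marg by (intro fdiv_condV_nonneg[OF f]) simp
    ultimately show ?thesis
      using Gext_mono[OF G] by (simp add: marg ereal_mult_left_mono)
  qed (simp add: marg zero_ereal_def[symmetric])
  then show "\<exists>q'\<in>UNIV. (\<Sum>u\<in>UNIV. ereal (pmf (margU J2) u) * Gext G (fdiv f (condV J2 u) (pmf q')))
      \<le> (\<Sum>u\<in>UNIV. ereal (pmf (margU J1) u) * Gext G (fdiv f (condV J1 u) (pmf q)))"
    by (intro bexI[of _ q'] sum_mono) auto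
qed

lemma Gext_fdiv_mixture_le:
  fixes M :: "'t::finite \<Rightarrow> real" and c :: "'t \<Rightarrow> 'v::finite \<Rightarrow> real"
  assumes f: "convex_on {0..} f" "f 1 = 0" and G: "mono_on {0..} G" "convex_on {0..} G"
    and M: "\<And>t. 0 \<le> M t" and c: "\<And>t v. 0 \<le> c t v" "\<And>t. 0 < M t \<Longrightarrow> (\<Sum>v\<in>UNIV. c t v) = 1"
  shows "ereal (sum M UNIV) * Gext G (fdiv f (\<lambda>v. (\<Sum>t\<in>UNIV. M t * c t v) / sum M UNIV) (pmf q))
    \<le> (\<Sum>t\<in>UNIV. ereal (M t) * Gext G (fdiv f (c t) (pmf q)))"
proof (cases "sum M UNIV = 0")
  case True
  then have "M t = 0" for t
    using M by (simp add: sum_nonneg_eq_0_iff)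
  then show ?thesis
    by (simp add: zero_ereal_def[symmetric])
next
  case False
  define m where "m = sum M UNIV"
  \<comment> \<open>rows \<open>c t\<close> with \<open>M t = 0\<close> need not be distributions, so Jensen is applied over \<open>T\<close> only\<close>
  define T where "T = {t. 0 < M t}"
  define l where "l t = M t / m" for t
  have m: "0 < m"
    using False M sum_nonneg[of UNIV M] by (simp add: m_def)
  have outside_T: "M t = 0" if "t \<notin> T" for t
    using that M[of t] by (simp add: T_def)
  have sum_T: "(\<Sum>t\<in>T. h t) = (\<Sum>t\<in>UNIV. h t)" if "\<And>t. M t = 0 \<Longrightarrow> h t = 0" for h :: "'t \<Rightarrow> 'a::comm_monoid_add"
    using that outside_T by (intro sum.mono_neutral_left) auto
  have l: "\<And>t. 0 \<le> l t" "(\<Sum>t\<in>T. l t) = 1"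
    using M m by (simp_all add: l_def sum_T m_def flip: sum_divide_distrib)
  have "(\<Sum>v\<in>UNIV. \<Sum>t\<in>T. l t * c t v) = 1"
    using c(2) l(2) by (subst sum.swap) (simp add: T_def flip: sum_distrib_left)
  note mixture = this sum_nonneg[OF mult_nonneg_nonneg[OF l(1) c(1)]]
  have mix: "(\<lambda>v. (\<Sum>t\<in>UNIV. M t * c t v) / m) = (\<lambda>v. \<Sum>t\<in>T. l t * c t v)"
    by (simp add: fun_eq_iff sum_T l_def sum_divide_distrib)
  have "Gext G (fdiv f (\<lambda>v. \<Sum>t\<in>T. l t * c t v) (pmf q))
      \<le> Gext G (\<Sum>t\<in>T. ereal (l t) * fdiv f (c t) (pmf q))"
    using l c mixture by (intro Gext_mono[OF G(1)] fdiv_mixture_le[OF f(1)] fdiv_nonneg[OF f])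
      (simp_all add: sum_pmf_UNIV)
  also have "\<dots> \<le> (\<Sum>t\<in>T. ereal (l t) * Gext G (fdiv f (c t) (pmf q)))"
    using l c m by (intro Gext_jensen[OF G] fdiv_nonneg[OF f])
      (auto simp: T_def l_def sum_pmf_UNIV)
  finally have "ereal m * Gext G (fdiv f (\<lambda>v. \<Sum>t\<in>T. l t * c t v) (pmf q))
      \<le> (\<Sum>t\<in>T. ereal m * (ereal (l t) * Gext G (fdiv f (c t) (pmf q))))"
    using m by (simp add: ereal_mult_left_mono flip: sum_distrib_left_ereal)
  also have "\<dots> = (\<Sum>t\<in>UNIV. ereal (M t) * Gext G (fdiv f (c t) (pmf q)))"
    using m by (simp add: sum_T l_def mult.assoc[symmetric])
  finally show ?thesis
    by (simp only: m_def[symmetric] mix)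
qed

text \<open>\<open>markov_chain J\<^sub>U\<^sub>T J\<^sub>T\<^sub>V J\<^sub>U\<^sub>V\<close>: \<open>J\<^sub>U\<^sub>V\<close> is the \<open>(U, V)\<close>-marginal of a Markov chain
  \<open>U \<rightarrow> T \<rightarrow> V\<close> with \<open>(U, T)\<close>-marginal \<open>J\<^sub>U\<^sub>T\<close> and \<open>(T, V)\<close>-marginal \<open>J\<^sub>T\<^sub>V\<close>.\<close>
definition markov_chain :: "('u \<times> 't::finite) pmf \<Rightarrow> ('t \<times> 'v) pmf \<Rightarrow> ('u \<times> 'v) pmf \<Rightarrow> bool" where
  "markov_chain JUT JTV JUV \<longleftrightarrow>
     map_pmf snd JUT = map_pmf fst JTV \<and>
     (\<forall>u v. pmf JUV (u, v) = (\<Sum>t\<in>UNIV. pmf JUT (u, t) * condV JTV t v))"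

lemma markov_chain_pmf_eq_0:
  fixes JUT :: "('u::finite \<times> 't::finite) pmf"
  assumes "markov_chain JUT JTV JUV" and "pmf (margU JTV) t = 0"
  shows "pmf JUT (u, t) = 0"
proof -
  have "(\<Sum>u\<in>UNIV. pmf JUT (u, t)) = 0"
    using assms by (simp add: markov_chain_def margU_def flip: pmf_map_snd_eq_sum)
  then show ?thesis
    by (simp add: sum_nonneg_eq_0_iff)
qed

lemma markov_chain_sum_condV:
  fixes JUT :: "('u::finite \<times> 't::finite) pmf" and JTV :: "('t \<times> 'v::finite) pmf"
  assumes "markov_chain JUT JTV JUV" and "pmf JUT (u, t) \<noteq> 0"
  shows "(\<Sum>v\<in>UNIV. condV JTV t v) = 1"
  using assms markov_chain_pmf_eq_0 sum_condV_eq_1 by metis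

lemma markov_chain_margU:
  fixes JUT :: "('u::finite \<times> 't::finite) pmf" and JTV :: "('t \<times> 'v::finite) pmf"
  assumes "markov_chain JUT JTV JUV"
  shows "pmf (margU JUV) u = pmf (margU JUT) u"
proof -
  have "pmf (margU JUV) u = (\<Sum>t\<in>UNIV. pmf JUT (u, t) * (\<Sum>v\<in>UNIV. condV JTV t v))"
    using assms by (simp add: markov_chain_def pmf_margU sum_distrib_left) (rule sum.swap)
  also have "\<dots> = (\<Sum>t\<in>UNIV. pmf JUT (u, t))"
    using markov_chain_sum_condV[OF assms] by (intro sum.cong) auto
  finally show ?thesis
    by (simp add: pmf_margU)
qed

lemma markov_chain_IGf_le_UT:
  fixes JUT :: "('u::finite \<times> 't::finite) pmf" and JTV :: "('t \<times> 'v::finite) pmf"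
  assumes f: "convex_on {0..} f" "f 1 = 0" and G: "mono_on {0..} G"
    and chain: "markov_chain JUT JTV JUV"
  shows "IGf G f JUV \<le> IGf G f JUT"
proof -
  \<comment> \<open>rows of \<open>condV JTV\<close> of zero \<open>T\<close>-mass are not distributions; they carry no weight and
    are replaced by the uniform one\<close>
  define K where "K t = (if pmf (margU JTV) t = 0 then (\<lambda>_. 1 / CARD('v)) else condV JTV t)" for t
  have K: "\<And>t v. 0 \<le> K t v" "\<And>t. (\<Sum>v\<in>UNIV. K t v) = 1"
    by (simp_all add: K_def condV_nonneg sum_condV_eq_1)
  have K_eq: "pmf JUT (u, t) * condV JTV t v = pmf JUT (u, t) * K t v" for u t v
    using markov_chain_pmf_eq_0[OF chain, of t u] by (simp add: K_def)
  have "pmf JUV (u, v) = (\<Sum>t\<in>UNIV. pmf JUT (u, t) * K t v)" for u v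
    using chain by (simp add: markov_chain_def K_eq)
  then show ?thesis
    by (rule IGf_le_of_channel[OF f G K])
qed

lemma markov_chain_IGf_le_TV:
  fixes JUT :: "('u::finite \<times> 't::finite) pmf" and JTV :: "('t \<times> 'v::finite) pmf"
  assumes f: "convex_on {0..} f" "f 1 = 0" and G: "mono_on {0..} G" "convex_on {0..} G"
    and chain: "markov_chain JUT JTV JUV"
  shows "IGf G f JUV \<le> IGf G f JTV"
  unfolding IGf_def
proof (rule INF_mono)
  fix q :: "'v pmf"
  define D where "D t = Gext G (fdiv f (condV JTV t) (pmf q))" for t
  have "ereal (pmf (margU JUV) u) * Gext G (fdiv f (condV JUV u) (pmf q))
      \<le> (\<Sum>t\<in>UNIV. ereal (pmf JUT (u, t)) * D t)" for u
  proof -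
    have "pmf (margU JUV) u = (\<Sum>t\<in>UNIV. pmf JUT (u, t))"
      using markov_chain_margU[OF chain] by (simp add: pmf_margU)
    moreover have "condV JUV u = (\<lambda>v. (\<Sum>t\<in>UNIV. pmf JUT (u, t) * condV JTV t v) / pmf (margU JUV) u)"
      using chain by (simp add: fun_eq_iff condV_def markov_chain_def)
    moreover have "ereal (\<Sum>t\<in>UNIV. pmf JUT (u, t))
        * Gext G (fdiv f (\<lambda>v. (\<Sum>t\<in>UNIV. pmf JUT (u, t) * condV JTV t v)
            / (\<Sum>t\<in>UNIV. pmf JUT (u, t))) (pmf q))
      \<le> (\<Sum>t\<in>UNIV. ereal (pmf JUT (u, t)) * D t)"
      unfolding D_def using markov_chain_sum_condV[OF chain]
      by (intro Gext_fdiv_mixture_le[OF f G pmf_nonneg condV_nonneg]) (metis less_irrefl)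
    ultimately show ?thesis
      by simp
  qed
  then have "(\<Sum>u\<in>UNIV. ereal (pmf (margU JUV) u) * Gext G (fdiv f (condV JUV u) (pmf q)))
      \<le> (\<Sum>u\<in>UNIV. \<Sum>t\<in>UNIV. ereal (pmf JUT (u, t)) * D t)"
    by (rule sum_mono)
  also have "\<dots> = (\<Sum>t\<in>UNIV. (\<Sum>u\<in>UNIV. ereal (pmf JUT (u, t))) * D t)"
    by (subst sum.swap) (simp add: sum_ereal_left_distrib del: sum_ereal)
  also have "\<dots> = (\<Sum>t\<in>UNIV. ereal (pmf (margU JTV) t) * D t)"
    using chain by (simp add: markov_chain_def margU_def flip: pmf_map_snd_eq_sum)
  finally show "\<exists>q'\<in>UNIV. (\<Sum>u\<in>UNIV. ereal (pmf (margU JUV) u) * Gext G (fdiv f (condV JUV u) (pmf q')))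
      \<le> (\<Sum>t\<in>UNIV. ereal (pmf (margU JTV) t) * Gext G (fdiv f (condV JTV t) (pmf q)))"
    unfolding D_def by blast
qed

subsection \<open>Four-variable Markov chains\<close>

lemma markov_chain4_factorization:
  fixes P :: "('a::finite \<times> 'x::finite \<times> 'y::finite \<times> 'b::finite) pmf"
  assumes markov: "\<And>a x y b.
      pmf P (a, x, y, b) * pmf (map_pmf (\<lambda>(a, x, y, b). x) P) x
                         * pmf (map_pmf (\<lambda>(a, x, y, b). y) P) y
    = pmf (map_pmf (\<lambda>(a, x, y, b). (a, x)) P) (a, x)
      * pmf (map_pmf (\<lambda>(a, x, y, b). (x, y)) P) (x, y)
      * pmf (map_pmf (\<lambda>(a, x, y, b). (y, b)) P) (y, b)"
  shows "pmf P (a, x, y, b) = pmf (map_pmf (\<lambda>(a, x, y, b). (a, x)) P) (a, x)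
    * condV (map_pmf (\<lambda>(a, x, y, b). (x, y)) P) x y * condV (map_pmf (\<lambda>(a, x, y, b). (y, b)) P) y b"
proof -
  define JXY where "JXY = map_pmf (\<lambda>(a, x, y, b). (x, y)) P"
  define JYB where "JYB = map_pmf (\<lambda>(a, x, y, b). (y, b)) P"
  define pX where "pX = pmf (map_pmf (\<lambda>(a, x, y, b). x) P) x"
  define pY where "pY = pmf (map_pmf (\<lambda>(a, x, y, b). y) P) y"
  have cond: "condV JXY x y = pmf JXY (x, y) / pX" "condV JYB y b = pmf JYB (y, b) / pY"
    by (simp_all add: condV_def margU_def map_pmf_comp split_def JXY_def JYB_def pX_def pY_def)
  have "pmf P (a, x, y, b) \<le> pX" "pmf P (a, x, y, b) \<le> pY"
    using pmf_le_pmf_map[of P "(a, x, y, b)" "\<lambda>(a, x, y, b). x"]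
      pmf_le_pmf_map[of P "(a, x, y, b)" "\<lambda>(a, x, y, b). y"] by (simp_all add: pX_def pY_def)
  \<comment> \<open>if \<open>pX = 0\<close> or \<open>pY = 0\<close>, both sides vanish (the right one because \<open>z / 0 = 0\<close>)\<close>
  then consider "pX = 0" "pmf P (a, x, y, b) = 0" | "pY = 0" "pmf P (a, x, y, b) = 0" | "pX \<noteq> 0" "pY \<noteq> 0"
    using pmf_nonneg[of P "(a, x, y, b)"] by fastforce
  then show ?thesis
    unfolding JXY_def[symmetric] JYB_def[symmetric]
    by cases (use markov[of a x y b, folded JXY_def JYB_def pX_def pY_def] in \<open>simp_all add: cond field_simps\<close>)
qed

lemma markov_chain4_AXY:
  fixes P :: "('a::finite \<times> 'x::finite \<times> 'y::finite \<times> 'b::finite) pmf"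
  assumes factor: "\<And>a x y b. pmf P (a, x, y, b) = pmf (map_pmf (\<lambda>(a, x, y, b). (a, x)) P) (a, x)
    * condV (map_pmf (\<lambda>(a, x, y, b). (x, y)) P) x y * condV (map_pmf (\<lambda>(a, x, y, b). (y, b)) P) y b"
  shows "markov_chain (map_pmf (\<lambda>(a, x, y, b). (a, x)) P) (map_pmf (\<lambda>(a, x, y, b). (x, y)) P)
    (map_pmf (\<lambda>(a, x, y, b). (a, y)) P)"
  unfolding markov_chain_def
proof (intro conjI allI)
  let ?JXY = "map_pmf (\<lambda>(a, x, y, b). (x, y)) P" and ?JYB = "map_pmf (\<lambda>(a, x, y, b). (y, b)) P"
  show "map_pmf snd (map_pmf (\<lambda>(a, x, y, b). (a, x)) P) = map_pmf fst ?JXY"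
    by (simp add: map_pmf_comp split_def)
  fix a y
  have cancel: "condV ?JXY x y * (\<Sum>b\<in>UNIV. condV ?JYB y b) = condV ?JXY x y" for x
  proof (cases "pmf (margU ?JYB) y = 0")
    case True
    have "map_pmf snd ?JXY = margU ?JYB"
      by (simp add: margU_def map_pmf_comp split_def)
    then have "pmf ?JXY (x, y) = 0"
      using True pmf_le_pmf_map[of ?JXY "(x, y)" snd] by (simp add: order.antisym)
    then show ?thesis
      by (simp add: condV_def)
  qed (simp add: sum_condV_eq_1)
  have "pmf (map_pmf (\<lambda>(a, x, y, b). (a, y)) P) (a, y) = (\<Sum>x\<in>UNIV. \<Sum>b\<in>UNIV. pmf P (a, x, y, b))"
    by (simp add: pmf_marginal_simps del: UNIV_Times_UNIV)
  also have "\<dots> = (\<Sum>x\<in>UNIV. pmf (map_pmf (\<lambda>(a, x, y, b). (a, x)) P) (a, x)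
      * (condV ?JXY x y * (\<Sum>b\<in>UNIV. condV ?JYB y b)))"
    by (simp add: factor mult.assoc sum_distrib_left)
  finally show "pmf (map_pmf (\<lambda>(a, x, y, b). (a, y)) P) (a, y)
    = (\<Sum>x\<in>UNIV. pmf (map_pmf (\<lambda>(a, x, y, b). (a, x)) P) (a, x) * condV ?JXY x y)"
    by (simp only: cancel)
qed

lemma markov_chain4_AYB:
  fixes P :: "('a::finite \<times> 'x::finite \<times> 'y::finite \<times> 'b::finite) pmf"
  assumes factor: "\<And>a x y b. pmf P (a, x, y, b) = pmf (map_pmf (\<lambda>(a, x, y, b). (a, x)) P) (a, x)
    * condV (map_pmf (\<lambda>(a, x, y, b). (x, y)) P) x y * condV (map_pmf (\<lambda>(a, x, y, b). (y, b)) P) y b"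
  shows "markov_chain (map_pmf (\<lambda>(a, x, y, b). (a, y)) P) (map_pmf (\<lambda>(a, x, y, b). (y, b)) P)
    (map_pmf (\<lambda>(a, x, y, b). (a, b)) P)"
  unfolding markov_chain_def
proof (intro conjI allI)
  show "map_pmf snd (map_pmf (\<lambda>(a, x, y, b). (a, y)) P) = map_pmf fst (map_pmf (\<lambda>(a, x, y, b). (y, b)) P)"
    by (simp add: map_pmf_comp split_def)
  fix a b
  have AY: "pmf (map_pmf (\<lambda>(a, x, y, b). (a, y)) P) (a, y)
    = (\<Sum>x\<in>UNIV. pmf (map_pmf (\<lambda>(a, x, y, b). (a, x)) P) (a, x) * condV (map_pmf (\<lambda>(a, x, y, b). (x, y)) P) x y)"
    for y
    using markov_chain4_AXY[OF factor] by (simp add: markov_chain_def)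
  have "pmf (map_pmf (\<lambda>(a, x, y, b). (a, b)) P) (a, b) = (\<Sum>y\<in>UNIV. \<Sum>x\<in>UNIV. pmf P (a, x, y, b))"
    by (simp add: pmf_marginal_simps del: UNIV_Times_UNIV) (rule sum.swap)
  then show "pmf (map_pmf (\<lambda>(a, x, y, b). (a, b)) P) (a, b)
    = (\<Sum>y\<in>UNIV. pmf (map_pmf (\<lambda>(a, x, y, b). (a, y)) P) (a, y) * condV (map_pmf (\<lambda>(a, x, y, b). (y, b)) P) y b)"
    by (simp add: factor AY sum_distrib_right)
qed

theorem lemma3:
  fixes P :: "('a::finite \<times> 'x::finite \<times> 'y::finite \<times> 'b::finite) pmf"
    and f G :: "real \<Rightarrow> real"
  assumes markov: "\<And>a x y b.
      pmf P (a, x, y, b) * pmf (map_pmf (\<lambda>(a, x, y, b). x) P) x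
                         * pmf (map_pmf (\<lambda>(a, x, y, b). y) P) y
    = pmf (map_pmf (\<lambda>(a, x, y, b). (a, x)) P) (a, x)
      * pmf (map_pmf (\<lambda>(a, x, y, b). (x, y)) P) (x, y)
      * pmf (map_pmf (\<lambda>(a, x, y, b). (y, b)) P) (y, b)"
    and f_convex: "convex_on {0..} f" and f1: "f 1 = 0"
    and G_mono: "mono_on {0..} G" and G_convex: "convex_on {0..} G"
  shows "IGf G f (map_pmf (\<lambda>(a, x, y, b). (a, b)) P)
         \<le> IGf G f (map_pmf (\<lambda>(a, x, y, b). (x, y)) P)"
proof -
  note factor = markov_chain4_factorization[OF markov]
  have "IGf G f (map_pmf (\<lambda>(a, x, y, b). (a, b)) P) \<le> IGf G f (map_pmf (\<lambda>(a, x, y, b). (a, y)) P)"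
    by (rule markov_chain_IGf_le_UT[OF f_convex f1 G_mono markov_chain4_AYB[OF factor]])
  also have "\<dots> \<le> IGf G f (map_pmf (\<lambda>(a, x, y, b). (x, y)) P)"
    by (rule markov_chain_IGf_le_TV[OF f_convex f1 G_mono G_convex markov_chain4_AXY[OF factor]])
  finally show ?thesis .
qed

end
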